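(* Let $q$ be an odd prime power and $n=\frac{q^3+1}{2}$. For an integer $\delta$ with $1\le\delta-1\le\frac{q^2-1}{2}$ put $\epsilon=\lceil(\delta-1)(1-q^{-1})\rceil$. Then $\mathcal{C}_{(n,q,\delta,1)}$ has parameters $[n,k,d\ge\delta]$ and $\mathcal{C}_{(n,q,\delta+1,0)}$ has parameters $[n,k-1,d\ge2\delta]$, where $k=n-6\epsilon$ if $2\le\delta\le\frac{q^2-1}{2}-\frac{q-3}{2}$, and $k=n-6\epsilon+6\big(\delta-\frac{q^2-1}{2}+\lfloor\frac{q-2}{2}\rfloor\big)$ if $\frac{q^2-1}{2}-\frac{q-3}{2}<\delta\le\frac{q^2-1}{2}+1$.
   Context: Let $q$ be a prime power and $n\ge2$ an integer with $\gcd(n,q)=1$. Let $\ell=\mathrm{ord}_n(q)$, let $\alpha$ be a generator of $\mathbb{F}_{q^\ell}^*$, $\beta=\alpha^{(q^\ell-1)/n}$, and let $m_i(x)$ be the minimal polynomial of $\beta^i$ over $\mathbb{F}_q$. For integers $b\ge0$ and $2\le\delta\le n$, $\mathcal{C}_{(n,q,\delta,b)}$ denotes the cyclic (BCH) code of length $n$ over $\mathbb{F}_q$ with generator polynomial $\mathrm{lcm}(m_b(x),\dots,m_{b+\delta-2}(x))$. $[n,k,d\ge D]$ means length $n$, dimension $k$, minimum Hamming distance at least $D$. *)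

theory Defs
  imports "HOL-Computational_Algebra.Computational_Algebra" "HOL-Number_Theory.Number_Theory"
begin

definition field_emb :: "('a::field \<Rightarrow> 'b::field) \<Rightarrow> bool" where
  "field_emb e \<longleftrightarrow> e 1 = 1 \<and> (\<forall>x y. e (x + y) = e x + e y) \<and> (\<forall>x y. e (x * y) = e x * e y)"

definition min_poly :: "('a::field \<Rightarrow> 'b::field) \<Rightarrow> 'b \<Rightarrow> 'a poly" where
  "min_poly e x = (THE p. lead_coeff p = 1 \<and> poly (map_poly e p) x = 0 \<and>
      (\<forall>r. poly (map_poly e r) x = 0 \<longrightarrow> p dvd r))"

text \<open>Generator polynomial of the BCH code C_(n,q,delta,b), where alpha generates the
  multiplicative group of the extension field 'b (of order q^ell) and beta = alpha^((q^ell-1)/n).\<close>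
definition bch_gen :: "('a::field_gcd \<Rightarrow> 'b::field) \<Rightarrow> 'b \<Rightarrow> nat \<Rightarrow> nat \<Rightarrow> nat \<Rightarrow> 'a poly" where
  "bch_gen e \<alpha> n \<delta> b =
     (let \<beta> = \<alpha> ^ ((card (UNIV :: 'b set) - 1) div n)
      in Lcm ((\<lambda>i. min_poly e (\<beta> ^ i)) ` {b .. b + \<delta> - 2}))"

text \<open>The cyclic code of length n generated by g, as a subset of F_q[x]/(x^n-1), represented by
  the polynomials of degree < n (codeword (c_0,...,c_{n-1}) is c_0 + c_1 x + ... + c_{n-1} x^{n-1}).\<close>
definition cyclic_code :: "nat \<Rightarrow> 'a::field poly \<Rightarrow> 'a poly set" where
  "cyclic_code n g = {c. degree c < n \<and> g dvd c}"

definition bch_code :: "('a::field_gcd \<Rightarrow> 'b::field) \<Rightarrow> 'b \<Rightarrow> nat \<Rightarrow> nat \<Rightarrow> nat \<Rightarrow> 'a poly set" where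
  "bch_code e \<alpha> n \<delta> b = cyclic_code n (bch_gen e \<alpha> n \<delta> b)"

definition hweight :: "'a::zero poly \<Rightarrow> nat" where
  "hweight c = card {i. Polynomial.coeff c i \<noteq> 0}"

text \<open>Minimum distance at least D (for a linear code: minimal weight of a nonzero codeword).\<close>
definition min_dist_ge :: "'a::zero poly set \<Rightarrow> nat \<Rightarrow> bool" where
  "min_dist_ge C D \<longleftrightarrow> (\<forall>c\<in>C. c \<noteq> 0 \<longrightarrow> D \<le> hweight c)"

text \<open>[n,k,d>=D] code over F_q (q = CARD('a)): code length n (codewords of degree < n),
  dimension k over F_q (equivalently q^k codewords), minimum distance >= D.\<close>
definition code_params :: "'a::field poly set \<Rightarrow> nat \<Rightarrow> nat \<Rightarrow> nat \<Rightarrow> bool" where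
  "code_params C n k D \<longleftrightarrow> (\<forall>c\<in>C. degree c < n) \<and> card C = card (UNIV :: 'a set) ^ k \<and> min_dist_ge C D"

end

theory Submission
  imports Defs "HOL-Library.Cardinality"
begin

text \<open>Let \<open>q = 2 r + 1\<close> and \<open>n = (q^3 + 1) / 2\<close>, so that \<open>q^3 \<equiv> -1 (mod n)\<close> and \<open>q\<close> has order six
  modulo \<open>n\<close>. Every \<open>q\<close>-cyclotomic coset modulo \<open>n\<close> of an \<open>i\<close> with \<open>1 \<le> i \<le> (q^2 - 1) / 2\<close> has
  six elements and contains exactly one coset leader \<open>a \<le> i\<close> with \<open>a \<le> q r\<close> not divisible by \<open>q\<close>. The
  generator polynomial of \<open>C(n,q,\<delta>,1)\<close> has as roots exactly the \<open>\<beta>^z\<close> for \<open>z\<close> in the union of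
  the cosets of \<open>1, \<dots>, \<delta> - 1\<close>, so its degree is six times the number of leaders up to
  \<open>\<delta> - 1\<close>, which yields \<open>k\<close>; adding the coset \<open>{0}\<close> gives \<open>k - 1\<close> for \<open>C(n,q,\<delta>+1,0)\<close>. The
  distances follow from the BCH bound: the first code has the \<open>\<delta> - 1\<close> consecutive zeros
  \<open>\<beta>^1, \<dots>, \<beta>^(\<delta>-1)\<close>, and since \<open>-i \<equiv> i q^3\<close> the second has the \<open>2 \<delta> - 1\<close> consecutive zeros
  \<open>\<beta>^(-(\<delta>-1)), \<dots>, \<beta>^(\<delta>-1)\<close>.\<close>

section \<open>Finite fields, embeddings and the Frobenius map\<close>

text \<open>Multiplication by \<open>x \<noteq> 0\<close> permutes the nonzero elements, so \<open>x^(q-1) = 1\<close>.\<close>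
lemma finite_field_power_card:
  fixes x :: "'a::{field,finite}"
  shows "x ^ CARD('a) = x"
proof (cases "x = 0")
  case False
  have "x * (\<Prod>y\<in>UNIV-{0}. x * y) = x * x ^ (CARD('a) - 1) * \<Prod>(UNIV-{0})"
    by (simp add: prod.distrib mult_ac)
  also have "x * x ^ (CARD('a) - 1) = x ^ CARD('a)"
    using finite_UNIV_card_ge_0[where ?'a = 'a] by (simp flip: power_Suc)
  also have "(\<Prod>y\<in>UNIV-{0}. x * y) = (\<Prod>y\<in>UNIV-{0}. y)"
    by (rule prod.reindex_bij_witness[of _ "\<lambda>y. y / x" "\<lambda>y. x * y"]) (use False in auto)
  finally show ?thesis
    by simp
qed (use finite_UNIV_card_ge_0[where ?'a = 'a] in auto)

lemma card_finite_field_ge_2: "2 \<le> CARD('a::{field,finite})"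
  using card_mono[of "UNIV :: 'a set" "{0, 1}"] by simp

text \<open>The polynomial \<open>(X + 1)^q - X^q - 1\<close> has degree below \<open>q\<close> but vanishes on all
  \<open>q\<close> field elements, so all of its coefficients, the inner binomial coefficients, vanish.\<close>
lemma finite_field_binomial_eq_0:
  assumes "0 < k" "k < CARD('a::{field,finite})"
  shows "of_nat (CARD('a) choose k) = (0::'a)"
proof -
  define P :: "'a poly" where "P = [:1,1:] ^ CARD('a) - Polynomial.monom 1 CARD('a) - 1"
  have q2: "2 \<le> CARD('a)"
    by (rule card_finite_field_ge_2)
  have high_coeffs: "Polynomial.coeff P i = 0" if "i \<ge> CARD('a)" for i
  proof (cases "i = CARD('a)")
    case False
    with that have "Polynomial.coeff ([:1,1::'a:] ^ CARD('a)) i = 0"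
      by (intro coeff_eq_0 le_less_trans[OF degree_power_le]) simp
    with False that q2 show ?thesis
      by (simp add: P_def coeff_monom)
  qed (use q2 in \<open>simp add: P_def coeff_linear_power\<close>)
  have "P = 0"
  proof (rule ccontr)
    assume "P \<noteq> 0"
    have "degree P \<le> CARD('a) - 1"
      by (rule degree_le) (use high_coeffs in auto)
    moreover have "{x. poly P x = 0} = UNIV"
      by (simp add: P_def poly_power poly_monom finite_field_power_card)
    ultimately show False
      using card_poly_roots_bound[OF \<open>P \<noteq> 0\<close>] q2 by simp
  qed
  then have "Polynomial.coeff P k = 0"
    by simp
  with assms show ?thesis
    by (simp add: P_def coeff_linear_poly_power coeff_monom coeff_1)
qed

context
  fixes f :: "'a::field \<Rightarrow> 'b::field"
  assumes emb: "field_emb f"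
begin

lemma field_emb_add: "f (x + y) = f x + f y"
  and field_emb_mult: "f (x * y) = f x * f y"
  and field_emb_1: "f 1 = 1"
  using emb unfolding field_emb_def by auto

lemma field_emb_0: "f 0 = 0"
  using field_emb_add[of 0 0] by (metis add_cancel_right_right)

lemma field_emb_uminus: "f (- x) = - f x"
  using field_emb_add[of x "- x"] by (simp add: field_emb_0 eq_neg_iff_add_eq_0 add.commute)

lemma field_emb_diff: "f (x - y) = f x - f y"
  using field_emb_add[of x "- y"] field_emb_uminus[of y] by simp

lemma field_emb_eq_0_iff: "f x = 0 \<longleftrightarrow> x = 0"
proof
  assume "f x = 0"
  then show "x = 0"
    using field_emb_mult[of x "inverse x"] field_emb_1 by (cases "x = 0") auto
qed (simp add: field_emb_0)

lemma field_emb_inj: "inj f"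
  by (rule injI) (metis field_emb_diff field_emb_eq_0_iff right_minus_eq)

lemma field_emb_power: "f (x ^ k) = f x ^ k"
  by (induction k) (simp_all add: field_emb_1 field_emb_mult)

lemma field_emb_of_nat: "f (of_nat m) = of_nat m"
  by (induction m) (simp_all add: field_emb_0 field_emb_1 field_emb_add)

lemma map_poly_emb_add: "map_poly f (p + q) = map_poly f p + map_poly f q"
  by (intro poly_eqI) (simp add: coeff_map_poly field_emb_0 field_emb_add)

lemma map_poly_emb_diff: "map_poly f (p - q) = map_poly f p - map_poly f q"
  by (intro poly_eqI) (simp add: coeff_map_poly field_emb_0 field_emb_diff)

lemma map_poly_emb_mult: "map_poly f (p * q) = map_poly f p * map_poly f q"
proof (induction p rule: pCons_induct)
  case (pCons a p)
  then show ?case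
    by (simp add: map_poly_emb_add map_poly_smult map_poly_pCons field_emb_0 field_emb_mult)
qed simp

lemma map_poly_emb_prod: "map_poly f (prod g A) = (\<Prod>i\<in>A. map_poly f (g i))"
  by (induction A rule: infinite_finite_induct) (simp_all add: field_emb_1 map_poly_emb_mult)

lemma degree_map_poly_emb: "degree (map_poly f p) = degree p"
  by (rule degree_map_poly) (simp add: field_emb_eq_0_iff)

lemma map_poly_emb_eq_0_iff: "map_poly f p = 0 \<longleftrightarrow> p = 0"
  by (rule map_poly_eq_0_iff) (simp_all add: field_emb_0 field_emb_eq_0_iff)

lemma poly_map_poly_emb: "poly (map_poly f p) (f x) = f (poly p x)"
  by (induction p rule: pCons_induct)
     (simp_all add: map_poly_pCons field_emb_0 field_emb_add field_emb_mult)

lemma hweight_map_poly_emb: "hweight (map_poly f p) = hweight p"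
  by (simp add: hweight_def coeff_map_poly field_emb_0 field_emb_eq_0_iff)

end

locale finite_field_extension =
  fixes e :: "'a::{field_gcd,finite} \<Rightarrow> 'b::{field,finite}"
  assumes emb: "field_emb e"
begin

definition frob :: "'b \<Rightarrow> 'b" where "frob x = x ^ CARD('a)"

lemma frob_add: "frob (x + y) = frob x + frob y"
proof -
  define q where "q = CARD('a)"
  have "(x + y) ^ q = (\<Sum>k\<le>q. of_nat (q choose k) * x ^ k * y ^ (q - k))"
    by (rule binomial_ring)
  also have "\<dots> = (\<Sum>k\<in>{0, q}. of_nat (q choose k) * x ^ k * y ^ (q - k))"
  proof (intro sum.mono_neutral_right ballI)
    fix k assume k: "k \<in> {..q} - {0, q}"
    have "(of_nat (q choose k) :: 'b) = e (of_nat (q choose k))"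
      by (simp add: field_emb_of_nat[OF emb])
    also have "\<dots> = 0"
      using finite_field_binomial_eq_0[where 'a = 'a, of k] k by (simp add: q_def field_emb_0[OF emb])
    finally show "of_nat (q choose k) * x ^ k * y ^ (q - k) = 0"
      by simp
  qed auto
  finally show ?thesis
    using card_finite_field_ge_2[where 'a = 'a] by (simp add: frob_def q_def add_ac)
qed

lemma field_emb_frob: "field_emb frob"
  unfolding field_emb_def using frob_add by (simp add: frob_def power_mult_distrib)

lemma frob_emb: "frob (e a) = e a"
  by (simp add: frob_def flip: field_emb_power[OF emb]) (simp add: finite_field_power_card)

text \<open>The fixed points of the Frobenius map are the roots of \<open>X^q - X\<close>, hence at most \<open>q\<close>
  many, and the \<open>q\<close> elements of the image of \<open>e\<close> are among them.\<close>
lemma frob_fixed_iff: "frob y = y \<longleftrightarrow> y \<in> range e"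
proof -
  define P :: "'b poly" where "P = Polynomial.monom 1 CARD('a) - [:0, 1:]"
  have q2: "2 \<le> CARD('a)"
    by (rule card_finite_field_ge_2)
  have "Polynomial.coeff P CARD('a) = 1"
    using q2 by (simp add: P_def coeff_monom coeff_pCons split: nat.split)
  then have "P \<noteq> 0"
    by auto
  have "degree P \<le> CARD('a)"
    unfolding P_def by (rule order.trans[OF degree_diff_le_max]) (use q2 in \<open>auto simp: degree_monom_eq\<close>)
  moreover have "{y. frob y = y} = {y. poly P y = 0}"
    by (auto simp: P_def frob_def poly_monom)
  ultimately have "card {y. frob y = y} \<le> CARD('a)"
    using card_poly_roots_bound[OF \<open>P \<noteq> 0\<close>] by simp
  moreover have "card (range e) = CARD('a)"
    using card_image[OF field_emb_inj[OF emb]] by simp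
  moreover have "range e \<subseteq> {y. frob y = y}"
    using frob_emb by auto
  moreover from this have "card (range e) \<le> card {y. frob y = y}"
    by (intro card_mono) auto
  ultimately have "range e = {y. frob y = y}"
    by (intro card_subset_eq) auto
  then show ?thesis
    by auto
qed

lemma map_poly_frob_fixed:
  assumes "map_poly frob P = P"
  shows "\<exists>h. P = map_poly e h"
proof
  have "Polynomial.coeff P i \<in> range e" for i
    using arg_cong[OF assms, of "\<lambda>p. Polynomial.coeff p i"]
    by (simp add: coeff_map_poly field_emb_0[OF field_emb_frob] flip: frob_fixed_iff)
  moreover have "inv_into UNIV e 0 = 0"
    using inv_f_f[OF field_emb_inj[OF emb], of 0] by (simp add: field_emb_0[OF emb])
  ultimately show "P = map_poly e (map_poly (inv_into UNIV e) P)"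
    by (intro poly_eqI) (simp add: coeff_map_poly field_emb_0[OF emb] f_inv_into_f)
qed

lemma poly_map_poly_emb_frob:
  assumes "poly (map_poly e r) x = 0"
  shows "poly (map_poly e r) (frob x) = 0"
proof -
  have "map_poly frob (map_poly e r) = map_poly e r"
    by (intro poly_eqI)
       (simp add: coeff_map_poly field_emb_0[OF emb] field_emb_0[OF field_emb_frob] frob_emb)
  then have "poly (map_poly e r) (frob x) = frob (poly (map_poly e r) x)"
    using poly_map_poly_emb[OF field_emb_frob, of "map_poly e r" x] by simp
  with assms show ?thesis
    by (simp add: field_emb_0[OF field_emb_frob])
qed

lemma poly_map_poly_emb_power_card:
  assumes "poly (map_poly e r) x = 0"
  shows "poly (map_poly e r) (x ^ CARD('a) ^ t) = 0"
proof (induction t)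
  case (Suc t)
  have "x ^ CARD('a) ^ Suc t = frob (x ^ CARD('a) ^ t)"
    unfolding frob_def power_Suc2 power_mult ..
  with poly_map_poly_emb_frob[OF Suc] show ?case
    by simp
qed (use assms in simp)

text \<open>The Frobenius map permutes the linear factors, so it fixes the coefficients.\<close>
lemma frob_stable_prod_in_range:
  assumes "finite S" "frob ` S \<subseteq> S"
  shows "\<exists>h. map_poly e h = (\<Prod>y\<in>S. [:- y, 1:])"
proof -
  have "inj_on frob S"
    using field_emb_inj[OF field_emb_frob] by (rule inj_on_subset) simp
  with assms have "frob ` S = S"
    by (intro endo_inj_surj)
  have "map_poly frob (\<Prod>y\<in>S. [:- y, 1:]) = (\<Prod>y\<in>S. [:- frob y, 1:])"
    by (simp add: map_poly_emb_prod[OF field_emb_frob] map_poly_pCons field_emb_0[OF field_emb_frob]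
        field_emb_1[OF field_emb_frob] field_emb_uminus[OF field_emb_frob])
  also have "\<dots> = (\<Prod>y\<in>frob ` S. [:- y, 1:])"
    using \<open>inj_on frob S\<close> by (simp add: prod.reindex)
  finally have "map_poly frob (\<Prod>y\<in>S. [:- y, 1:]) = (\<Prod>y\<in>S. [:- y, 1:])"
    using \<open>frob ` S = S\<close> by simp
  then show ?thesis
    using map_poly_frob_fixed by metis
qed

lemma exists_annihilator: "\<exists>p. p \<noteq> 0 \<and> poly (map_poly e p) x = 0"
proof -
  define p :: "'a poly" where "p = Polynomial.monom 1 CARD('b) - [:0, 1:]"
  have "Polynomial.coeff p CARD('b) = 1"
    using card_finite_field_ge_2[where 'a = 'b] by (simp add: p_def coeff_monom coeff_pCons split: nat.split)
  moreover have "map_poly e p = Polynomial.monom 1 CARD('b) - [:0, 1:]"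
    by (simp add: p_def map_poly_emb_diff[OF emb] map_poly_monom map_poly_pCons
        field_emb_0[OF emb] field_emb_1[OF emb])
  ultimately show ?thesis
    by (intro exI[of _ p]) (auto simp: poly_monom finite_field_power_card)
qed

text \<open>A nonzero annihilating polynomial of least degree, made monic, divides every
  annihilating polynomial, since the remainder also annihilates \<open>x\<close>.\<close>
lemma min_poly_exists:
  "\<exists>p. lead_coeff p = 1 \<and> poly (map_poly e p) x = 0 \<and>
     (\<forall>r. poly (map_poly e r) x = 0 \<longrightarrow> p dvd r)"
proof -
  obtain p0 where "p0 \<noteq> 0 \<and> poly (map_poly e p0) x = 0"
    using exists_annihilator by blast
  from ex_has_least_nat[where P = "\<lambda>p. p \<noteq> 0 \<and> poly (map_poly e p) x = 0" and m = degree, OF this]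
  obtain p where p: "p \<noteq> 0" "poly (map_poly e p) x = 0"
    and least: "\<And>r. r \<noteq> 0 \<Longrightarrow> poly (map_poly e r) x = 0 \<Longrightarrow> degree p \<le> degree r"
    by blast
  define P where "P = Polynomial.smult (inverse (lead_coeff p)) p"
  have "lead_coeff P = 1" "degree P = degree p" "P \<noteq> 0"
    using p(1) by (auto simp: P_def lead_coeff_smult)
  have root: "poly (map_poly e P) x = 0"
    using p(2) by (simp add: P_def map_poly_smult field_emb_0[OF emb] field_emb_mult[OF emb])
  have "P dvd r" if r: "poly (map_poly e r) x = 0" for r
  proof (rule ccontr)
    assume "\<not> P dvd r"
    then have "r mod P \<noteq> 0" "degree (r mod P) < degree P"
      using \<open>P \<noteq> 0\<close> by (auto simp: mod_eq_0_iff_dvd degree_mod_less_degree)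
    moreover have "r mod P = r - P * (r div P)"
      by (simp add: minus_mult_div_eq_mod)
    then have "poly (map_poly e (r mod P)) x = 0"
      using r root by (simp add: map_poly_emb_diff[OF emb] map_poly_emb_mult[OF emb])
    ultimately show False
      using least[of "r mod P"] \<open>degree P = degree p\<close> by simp
  qed
  with \<open>lead_coeff P = 1\<close> root show ?thesis
    by blast
qed

lemma min_poly_spec:
  "lead_coeff (min_poly e x) = 1 \<and> poly (map_poly e (min_poly e x)) x = 0 \<and>
     (\<forall>r. poly (map_poly e r) x = 0 \<longrightarrow> min_poly e x dvd r)"
  unfolding min_poly_def
proof (rule theI')
  show "\<exists>!p. lead_coeff p = 1 \<and> poly (map_poly e p) x = 0 \<and>
      (\<forall>r. poly (map_poly e r) x = 0 \<longrightarrow> p dvd r)"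
  proof (rule ex_ex1I[OF min_poly_exists])
    fix p p' :: "'a poly"
    assume p: "lead_coeff p = 1 \<and> poly (map_poly e p) x = 0 \<and>
        (\<forall>r. poly (map_poly e r) x = 0 \<longrightarrow> p dvd r)"
      and p': "lead_coeff p' = 1 \<and> poly (map_poly e p') x = 0 \<and>
        (\<forall>r. poly (map_poly e r) x = 0 \<longrightarrow> p' dvd r)"
    then have "p dvd p'" "p' dvd p"
      by blast+
    moreover have "normalize p = p" "normalize p' = p'"
      using p p' by (simp_all add: normalize_poly_eq_map_poly)
    ultimately show "p = p'"
      by (rule associated_eqI)
  qed
qed

lemma poly_map_poly_min_poly: "poly (map_poly e (min_poly e x)) x = 0"
  using min_poly_spec by blast

lemma min_poly_dvd: "poly (map_poly e r) x = 0 \<Longrightarrow> min_poly e x dvd r"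
  using min_poly_spec by blast

end

section \<open>The BCH bound and the size of cyclic codes\<close>

text \<open>Pairing the equations with the coefficients of \<open>\<Prod>s\<noteq>t. (X - f s)\<close> isolates \<open>y t\<close>.\<close>
lemma vandermonde_eq_0:
  fixes f y :: "'i \<Rightarrow> 'b::field"
  assumes "finite S" "inj_on f S"
    and eqs: "\<And>j. j < card S \<Longrightarrow> (\<Sum>i\<in>S. y i * f i ^ j) = 0"
    and "t \<in> S"
  shows "y t = 0"
proof -
  define L where "L = (\<Prod>s\<in>S - {t}. [:- f s, 1:])"
  have "card S > 0"
    using assms(1,4) by (auto simp: card_gt_0_iff)
  then have "degree L < card S"
    using assms(1,4) by (simp add: L_def degree_prod_eq_sum_degree)
  have "poly L (f t) \<noteq> 0"
    using assms(1,2,4) by (auto simp: L_def poly_prod inj_on_def)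
  have "poly L (f s) = 0" if "s \<in> S - {t}" for s
    using assms(1) that by (auto simp: L_def poly_prod)
  have "0 = (\<Sum>j\<le>degree L. Polynomial.coeff L j * (\<Sum>i\<in>S. y i * f i ^ j))"
    using eqs \<open>degree L < card S\<close> by simp
  also have "\<dots> = (\<Sum>i\<in>S. y i * poly L (f i))"
    by (simp add: poly_altdef sum_distrib_left sum_distrib_right mult_ac sum.swap[of _ S])
  also have "\<dots> = y t * poly L (f t)"
    using assms(1,4) \<open>\<And>s. s \<in> S - {t} \<Longrightarrow> poly L (f s) = 0\<close>
    by (intro sum.remove[THEN trans]) auto
  finally show ?thesis
    using \<open>poly L (f t) \<noteq> 0\<close> by simp
qed

text \<open>On the support \<open>S\<close> of \<open>c\<close>, the zeros \<open>\<beta>^(b+j)\<close> for \<open>j < |S|\<close> form a Vandermonde system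
  in the nodes \<open>\<beta>^i\<close> for the unknowns \<open>c\<^sub>i \<beta>^(b i)\<close>.\<close>
lemma bch_bound:
  fixes c :: "'b::field poly" and \<beta> :: 'b
  assumes "c \<noteq> 0" "degree c < n" "\<beta> \<noteq> 0" "inj_on (\<lambda>i. \<beta> ^ i) {..<n}"
    and roots: "\<And>j. j < D - 1 \<Longrightarrow> poly c (\<beta> ^ (b + j)) = 0"
  shows "D \<le> hweight c"
proof (rule ccontr)
  define S where "S = {i. Polynomial.coeff c i \<noteq> 0}"
  assume "\<not> D \<le> hweight c"
  then have "card S < D"
    by (simp add: hweight_def S_def)
  have "S \<subseteq> {..degree c}"
    by (auto simp: S_def le_degree)
  then have "finite S"
    by (rule finite_subset) simp
  have "inj_on (\<lambda>i. \<beta> ^ i) S"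
    using \<open>S \<subseteq> {..degree c}\<close> assms(2) by (intro inj_on_subset[OF assms(4)]) auto
  have "(\<Sum>i\<in>S. (Polynomial.coeff c i * \<beta> ^ (b * i)) * (\<beta> ^ i) ^ j) = 0" if "j < card S" for j
  proof -
    have "(\<Sum>i\<in>S. (Polynomial.coeff c i * \<beta> ^ (b * i)) * (\<beta> ^ i) ^ j)
        = (\<Sum>i\<le>degree c. Polynomial.coeff c i * (\<beta> ^ (b + j)) ^ i)"
      using \<open>S \<subseteq> {..degree c}\<close>
      by (intro sum.mono_neutral_cong_left)
         (auto simp: S_def power_add power_mult_distrib mult_ac simp flip: power_mult)
    also have "\<dots> = 0"
      using roots[of j] that \<open>card S < D\<close> by (simp add: poly_altdef)
    finally show ?thesis .
  qed
  moreover have "degree c \<in> S"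
    using assms(1) by (simp add: S_def)
  ultimately have "Polynomial.coeff c (degree c) * \<beta> ^ (b * degree c) = 0"
    by (rule vandermonde_eq_0[OF \<open>finite S\<close> \<open>inj_on (\<lambda>i. \<beta> ^ i) S\<close>])
  with assms(1,3) show False
    by simp
qed

lemma card_polys_coeffs_below:
  "card {p :: 'a::{zero,finite} poly. \<forall>i\<ge>m. Polynomial.coeff p i = 0} = CARD('a) ^ m"
proof (induction m)
  case 0
  have "{p :: 'a poly. \<forall>i\<ge>0. Polynomial.coeff p i = 0} = {0}"
    by (auto simp: poly_eq_iff)
  then show ?case
    by simp
next
  case (Suc m)
  have shift: "(\<forall>i\<ge>Suc m. Polynomial.coeff (pCons a p) i = 0) \<longleftrightarrow>
      (\<forall>i\<ge>m. Polynomial.coeff p i = 0)" for a and p :: "'a poly"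
    by (metis Suc_le_D Suc_le_mono coeff_pCons_Suc)
  have "{p :: 'a poly. \<forall>i\<ge>Suc m. Polynomial.coeff p i = 0}
      = (\<lambda>(a, p). pCons a p) ` (UNIV \<times> {p. \<forall>i\<ge>m. Polynomial.coeff p i = 0})"
  proof (intro Set.set_eqI iffI)
    fix p :: "'a poly"
    assume "p \<in> {p. \<forall>i\<ge>Suc m. Polynomial.coeff p i = 0}"
    moreover obtain a p' where "p = pCons a p'"
      by (cases p rule: pCons_cases)
    ultimately show "p \<in> (\<lambda>(a, p). pCons a p) ` (UNIV \<times> {p. \<forall>i\<ge>m. Polynomial.coeff p i = 0})"
      by (auto simp: shift)
  qed (use shift in fastforce)
  moreover have
    "inj_on (\<lambda>(a, p). pCons a p) (UNIV \<times> {p :: 'a poly. \<forall>i\<ge>m. Polynomial.coeff p i = 0})"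
    by (auto simp: inj_on_def)
  ultimately show ?case
    using Suc by (simp add: card_image card_cartesian_product)
qed

lemma card_cyclic_code:
  fixes g :: "'a::{field,finite} poly"
  assumes "g \<noteq> 0" "degree g \<le> n" "0 < n"
  shows "card (cyclic_code n g) = CARD('a) ^ (n - degree g)"
proof -
  let ?H = "{h. \<forall>i\<ge>n - degree g. Polynomial.coeff h i = 0}"
  have bounded_iff: "(\<forall>i\<ge>k. Polynomial.coeff h i = 0) \<longleftrightarrow> h = 0 \<or> degree h < k"
    for h :: "'a poly" and k
  proof
    assume "\<forall>i\<ge>k. Polynomial.coeff h i = 0"
    then show "h = 0 \<or> degree h < k"
      using leading_coeff_0_iff not_le by blast
  qed (auto intro: coeff_eq_0 less_le_trans)
  have "degree (g * h) < n \<longleftrightarrow> h \<in> ?H" for h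
    using assms by (cases "h = 0") (auto simp: bounded_iff degree_mult_eq)
  then have "cyclic_code n g = (\<lambda>h. g * h) ` ?H"
    by (auto simp: cyclic_code_def elim!: dvdE)
  moreover have "inj_on (\<lambda>h. g * h) ?H"
    using assms(1) by (auto simp: inj_on_def)
  ultimately show ?thesis
    by (simp add: card_image card_polys_coeffs_below)
qed

section \<open>Defining sets of BCH codes\<close>

text \<open>The union of the \<open>q\<close>-cyclotomic cosets modulo \<open>n\<close> of the elements of \<open>I\<close>, as a set of
  residues; for \<open>I = {b..b + \<delta> - 2}\<close> it is the defining set of the BCH code.\<close>
definition defining_set :: "nat \<Rightarrow> nat \<Rightarrow> nat set \<Rightarrow> nat set" where
  "defining_set q n I = {z. z < n \<and> (\<exists>i\<in>I. \<exists>t. [z = i * q ^ t] (mod n))}"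

lemma defining_set_subset: "defining_set q n I \<subseteq> {..<n}"
  by (auto simp: defining_set_def)

lemma finite_defining_set: "finite (defining_set q n I)"
  using defining_set_subset by (rule finite_subset) simp

lemma subset_defining_set: "I \<subseteq> {..<n} \<Longrightarrow> I \<subseteq> defining_set q n I"
  unfolding defining_set_def by (force intro: exI[of _ 0])

lemma defining_set_mult_mod:
  assumes "z \<in> defining_set q n I"
  shows "z * q mod n \<in> defining_set q n I"
proof -
  obtain i t where "i \<in> I" "[z = i * q ^ t] (mod n)" "z < n"
    using assms by (auto simp: defining_set_def)
  then have "[z * q = i * q ^ t * q] (mod n)"
    by (intro cong_scalar_right)
  then have "[z * q mod n = i * q ^ Suc t] (mod n)" "z * q mod n < n"
    using \<open>z < n\<close> by (auto simp: cong_def mult_ac)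
  with \<open>i \<in> I\<close> show ?thesis
    unfolding defining_set_def by blast
qed

lemma defining_set_insert_0:
  assumes "0 < n"
  shows "defining_set q n (insert 0 I) = insert 0 (defining_set q n I)"
  using assms by (auto simp: defining_set_def cong_def intro: exI[of _ 0])

locale bch_setting = finite_field_extension e
  for e :: "'a::{field_gcd,finite} \<Rightarrow> 'b::{field,finite}" +
  fixes \<alpha> :: 'b and n :: nat
  assumes generator: "\<forall>y. y \<noteq> 0 \<longrightarrow> (\<exists>j. y = \<alpha> ^ j)"
    and n_dvd: "n dvd CARD('b) - 1"
    and n_ge_2: "2 \<le> n"
begin

definition \<beta> :: 'b where "\<beta> = \<alpha> ^ ((CARD('b) - 1) div n)"

abbreviation mpoly :: "nat \<Rightarrow> 'a poly" where "mpoly i \<equiv> min_poly e (\<beta> ^ i)"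

lemma bch_code_eq: "bch_code e \<alpha> n \<delta> b = cyclic_code n (Lcm (mpoly ` {b .. b + \<delta> - 2}))"
  by (simp add: bch_code_def bch_gen_def \<beta>_def)

lemma n_le_card: "n \<le> CARD('b) - 1"
  using n_dvd card_finite_field_ge_2[where 'a = 'b] by (intro dvd_imp_le) auto

lemma alpha_nonzero: "\<alpha> \<noteq> 0"
proof
  assume "\<alpha> = 0"
  have "\<not> UNIV \<subseteq> {0, 1::'b}"
    using card_mono[of "{0, 1::'b}" UNIV] n_le_card n_ge_2 by auto
  then obtain y :: 'b where "y \<noteq> 0" "y \<noteq> 1"
    by auto
  moreover obtain j where "y = \<alpha> ^ j"
    using generator \<open>y \<noteq> 0\<close> by auto
  ultimately show False
    using \<open>\<alpha> = 0\<close> by (cases j) auto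
qed

lemma alpha_power_card: "\<alpha> ^ (CARD('b) - 1) = 1"
proof -
  have "\<alpha> * \<alpha> ^ (CARD('b) - 1) = \<alpha> * 1"
    using finite_field_power_card[of \<alpha>] n_le_card n_ge_2 by (simp flip: power_Suc)
  then show ?thesis
    using alpha_nonzero by simp
qed

lemma card_le_alpha_order:
  assumes "\<alpha> ^ k = 1" "0 < k"
  shows "CARD('b) - 1 \<le> k"
proof -
  have "UNIV - {0} \<subseteq> (\<lambda>j. \<alpha> ^ j) ` {..<k}"
  proof
    fix y :: 'b
    assume "y \<in> UNIV - {0}"
    then obtain j where "y = \<alpha> ^ j"
      using generator by auto
    also have "\<alpha> ^ j = (\<alpha> ^ k) ^ (j div k) * \<alpha> ^ (j mod k)"
      by (simp flip: power_mult power_add)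
    finally show "y \<in> (\<lambda>j. \<alpha> ^ j) ` {..<k}"
      using assms by simp
  qed
  then have "card (UNIV - {0::'b}) \<le> card ((\<lambda>j. \<alpha> ^ j) ` {..<k})"
    by (intro card_mono) auto
  also have "\<dots> \<le> k"
    using card_image_le[of "{..<k}" "\<lambda>j. \<alpha> ^ j"] by simp
  finally show ?thesis
    by (simp add: card_Diff_singleton)
qed

lemma beta_nonzero: "\<beta> \<noteq> 0"
  by (simp add: \<beta>_def alpha_nonzero)

lemma beta_power_n: "\<beta> ^ n = 1"
proof -
  have "(CARD('b) - 1) div n * n = CARD('b) - 1"
    using n_dvd by simp
  then show ?thesis
    unfolding \<beta>_def power_mult[symmetric] by (simp only: alpha_power_card)
qed

lemma beta_power_mod: "\<beta> ^ (k mod n) = \<beta> ^ k"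
proof -
  have "\<beta> ^ k = (\<beta> ^ n) ^ (k div n) * \<beta> ^ (k mod n)"
    by (simp flip: power_mult power_add)
  then show ?thesis
    by (simp add: beta_power_n)
qed

lemma beta_power_eq_1_iff: "\<beta> ^ k = 1 \<longleftrightarrow> n dvd k"
proof
  assume "\<beta> ^ k = 1"
  define d where "d = (CARD('b) - 1) div n"
  have "d * n = CARD('b) - 1"
    using n_dvd by (simp add: d_def)
  then have "0 < d"
    using n_le_card n_ge_2 by (cases d) auto
  have "\<alpha> ^ (d * (k mod n)) = 1"
    using \<open>\<beta> ^ k = 1\<close> beta_power_mod[of k] by (simp add: \<beta>_def d_def power_mult)
  moreover have "d * (k mod n) < d * n"
    using \<open>0 < d\<close> n_ge_2 by simp
  ultimately have "k mod n = 0"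
    using card_le_alpha_order[of "d * (k mod n)"] \<open>d * n = CARD('b) - 1\<close> by fastforce
  then show "n dvd k"
    by auto
next
  assume "n dvd k"
  then show "\<beta> ^ k = 1"
    using beta_power_mod[of k] by simp
qed

lemma inj_on_beta_power: "inj_on (\<lambda>i. \<beta> ^ i) {..<n}"
proof -
  have "i = j" if "\<beta> ^ i = \<beta> ^ j" "i \<le> j" "j < n" for i j
  proof -
    have "\<beta> ^ j = \<beta> ^ i * \<beta> ^ (j - i)"
      using that(2) by (simp flip: power_add)
    with that(1) have "\<beta> ^ (j - i) = 1"
      using beta_nonzero by simp
    then have "n dvd j - i"
      by (simp add: beta_power_eq_1_iff)
    with that show ?thesis
      using dvd_imp_le[of n "j - i"] by linarith
  qed
  then show ?thesis
    by (intro inj_onI) (metis lessThan_iff nle_le)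
qed

lemma frob_beta_power: "frob (\<beta> ^ z) = \<beta> ^ (z * CARD('a) mod n)"
  by (simp add: frob_def beta_power_mod flip: power_mult)

lemma poly_Lcm_mpoly_eq_0:
  assumes "z \<in> defining_set CARD('a) n I"
  shows "poly (map_poly e (Lcm (mpoly ` I))) (\<beta> ^ z) = 0"
proof -
  obtain i t where "i \<in> I" "[z = i * CARD('a) ^ t] (mod n)"
    using assms by (auto simp: defining_set_def)
  then have "\<beta> ^ z = (\<beta> ^ i) ^ CARD('a) ^ t"
    by (metis beta_power_mod cong_def power_mult)
  moreover have "mpoly i dvd Lcm (mpoly ` I)"
    using \<open>i \<in> I\<close> by (intro dvd_Lcm) simp
  then obtain k where "Lcm (mpoly ` I) = mpoly i * k"
    by (rule dvdE)
  then have "poly (map_poly e (Lcm (mpoly ` I))) (\<beta> ^ i) = 0"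
    by (simp add: map_poly_emb_mult[OF emb] poly_map_poly_min_poly)
  ultimately show ?thesis
    by (simp add: poly_map_poly_emb_power_card)
qed

text \<open>The product of \<open>X - \<beta>^z\<close> over the defining set is Frobenius stable, hence defined over
  the base field, and each \<open>mpoly i\<close> divides it; conversely the least common multiple
  vanishes at all these \<open>\<beta>^z\<close>.\<close>
lemma degree_Lcm_mpoly:
  assumes "I \<subseteq> {..<n}"
  shows "Lcm (mpoly ` I) \<noteq> 0 \<and> degree (Lcm (mpoly ` I)) = card (defining_set CARD('a) n I)"
proof -
  let ?Z = "defining_set CARD('a) n I" and ?g = "Lcm (mpoly ` I)"
  define S where "S = (\<lambda>z. \<beta> ^ z) ` ?Z"
  have "finite S"
    by (simp add: S_def finite_defining_set)
  have "card S = card ?Z"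
    unfolding S_def by (rule card_image[OF inj_on_subset[OF inj_on_beta_power defining_set_subset]])
  have "frob ` S \<subseteq> S"
    using defining_set_mult_mod by (auto simp: S_def frob_beta_power)
  then obtain h where h: "map_poly e h = (\<Prod>y\<in>S. [:- y, 1:])"
    using frob_stable_prod_in_range \<open>finite S\<close> by blast
  then have "h \<noteq> 0" "degree h = card S"
    using \<open>finite S\<close> by (simp_all add: map_poly_emb_eq_0_iff[OF emb, symmetric]
        degree_map_poly_emb[OF emb, symmetric] degree_prod_eq_sum_degree)
  have "mpoly i dvd h" if "i \<in> I" for i
  proof (rule min_poly_dvd)
    have "\<beta> ^ i \<in> S"
      using subset_defining_set[OF assms] that by (auto simp: S_def)
    then show "poly (map_poly e h) (\<beta> ^ i) = 0"
      using \<open>finite S\<close> by (simp add: h poly_prod)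
  qed
  then have "?g dvd h"
    by (intro Lcm_least) auto
  with \<open>h \<noteq> 0\<close> have "?g \<noteq> 0" "degree ?g \<le> card S"
    using dvd_imp_degree_le[OF \<open>?g dvd h\<close> \<open>h \<noteq> 0\<close>] \<open>degree h = card S\<close> by auto
  have "S \<subseteq> {x. poly (map_poly e ?g) x = 0}"
    using poly_Lcm_mpoly_eq_0 by (auto simp: S_def)
  then have "card S \<le> card {x. poly (map_poly e ?g) x = 0}"
    by (intro card_mono) auto
  also have "\<dots> \<le> degree ?g"
    using card_poly_roots_bound[of "map_poly e ?g"] \<open>?g \<noteq> 0\<close>
    by (simp add: map_poly_emb_eq_0_iff[OF emb] degree_map_poly_emb[OF emb])
  finally show ?thesis
    using \<open>?g \<noteq> 0\<close> \<open>degree ?g \<le> card S\<close> \<open>card S = card ?Z\<close> by simp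
qed

lemma code_params_Lcm_mpoly:
  assumes "I \<subseteq> {..<n}"
    and consecutive: "\<And>j. j < D - 1 \<Longrightarrow> (b + j) mod n \<in> defining_set CARD('a) n I"
  shows "code_params (cyclic_code n (Lcm (mpoly ` I))) n (n - card (defining_set CARD('a) n I)) D"
proof -
  let ?Z = "defining_set CARD('a) n I" and ?g = "Lcm (mpoly ` I)"
  have "card ?Z \<le> n"
    using card_mono[OF _ defining_set_subset] by fastforce
  then have "card (cyclic_code n ?g) = CARD('a) ^ (n - card ?Z)"
    using degree_Lcm_mpoly[OF assms(1)] n_ge_2 by (simp add: card_cyclic_code)
  moreover have "D \<le> hweight c" if "c \<in> cyclic_code n ?g" "c \<noteq> 0" for c
  proof -
    have "degree c < n" "?g dvd c"
      using that(1) by (simp_all add: cyclic_code_def)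
    then obtain k where "c = ?g * k"
      by (auto elim: dvdE)
    have "poly (map_poly e c) (\<beta> ^ (b + j)) = 0" if "j < D - 1" for j
      using poly_Lcm_mpoly_eq_0[OF consecutive[OF that]]
      by (simp add: \<open>c = ?g * k\<close> map_poly_emb_mult[OF emb] beta_power_mod)
    then have "D \<le> hweight (map_poly e c)"
      using \<open>c \<noteq> 0\<close> \<open>degree c < n\<close> beta_nonzero inj_on_beta_power
      by (intro bch_bound) (auto simp: map_poly_emb_eq_0_iff[OF emb] degree_map_poly_emb[OF emb])
    then show ?thesis
      by (simp add: hweight_map_poly_emb[OF emb])
  qed
  ultimately show ?thesis
    by (auto simp: code_params_def min_dist_ge_def cyclic_code_def)
qed

end

lemma int_dvd_abs_less_imp_eq_0: "(N::int) dvd x \<Longrightarrow> \<bar>x\<bar> < N \<Longrightarrow> x = 0"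
  using dvd_imp_le_int[of x N] by fastforce

lemma ceiling_mult_one_minus_inverse:
  assumes "0 < q"
  shows "\<lceil>real m * (1 - 1 / real q)\<rceil> = int m - int (m div q)"
proof -
  have "real m * (1 - 1 / real q) = - (real m / real q) + of_int (int m)"
    using assms by (simp add: field_simps)
  then show ?thesis
    by (simp only: ceiling_add_of_int ceiling_minus floor_divide_of_nat_eq)
qed

section \<open>Cyclotomic cosets modulo \<open>(q^3 + 1) / 2\<close>\<close>

locale q_cube_setting =
  fixes q r n :: nat
  assumes q_eq: "q = 2 * r + 1" and r_ge_1: "1 \<le> r" and double_n: "2 * n = q ^ 3 + 1"
begin

lemma q_ge_3: "3 \<le> q"
  using q_eq r_ge_1 by simp

lemma n_expand: "n = q * q * r + q * r + r + 1"
proof -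
  have "2 * n = 2 * (q * q * r + q * r + r + 1)"
    unfolding double_n q_eq by (simp add: power3_eq_cube algebra_simps)
  then show ?thesis
    by simp
qed

lemma half_q_square: "(q^2 - 1) div 2 = q * r + r"
  using q_eq by (simp add: power2_eq_square algebra_simps)

lemma n_dvd_q_cube_plus_1: "int n dvd int q ^ 3 + 1"
  using double_n by (metis dvd_triv_right of_nat_1 of_nat_add of_nat_mult of_nat_numeral of_nat_power)

lemma coprime_q_n: "coprime q n"
proof (rule coprimeI)
  fix d
  assume "d dvd q" "d dvd n"
  have "d dvd q ^ 3"
    using \<open>d dvd q\<close> by (rule dvd_trans) (simp add: power3_eq_cube)
  moreover have "d dvd q ^ 3 + 1"
    unfolding double_n[symmetric] using \<open>d dvd n\<close> by (rule dvd_mult)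
  ultimately have "d dvd 1"
    using dvd_add_right_iff by blast
  then show "is_unit d"
    by simp
qed

lemma q_power_mod_6: "[x * q ^ t = x * q ^ (t mod 6)] (mod n)"
proof -
  have "int q ^ 6 - 1 = (int q ^ 3 + 1) * (int q ^ 3 - 1)"
    by (simp add: algebra_simps flip: power_add)
  then have "int n dvd int q ^ 6 - 1"
    using n_dvd_q_cube_plus_1 by simp
  then have "[q ^ 6 = 1] (mod n)"
    by (metis cong_iff_dvd_diff cong_int_iff of_nat_1 of_nat_power)
  then have "[(q ^ 6) ^ (t div 6) * q ^ (t mod 6) = 1 ^ (t div 6) * q ^ (t mod 6)] (mod n)"
    by (intro cong_mult cong_pow cong_refl)
  then show ?thesis
    by (intro cong_scalar_left) (simp flip: power_mult power_add)
qed

lemma q_cube_cong_minus: "[i * q ^ 3 + i = 0] (mod n)"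
proof -
  have "int n dvd int i * (int q ^ 3 + 1)"
    using n_dvd_q_cube_plus_1 by simp
  then show ?thesis
    unfolding cong_0_iff int_dvd_int_iff[symmetric] by (simp add: algebra_simps)
qed

text \<open>Every \<open>q\<close>-cyclotomic coset modulo \<open>n\<close> of an element of \<open>{1..(q^2 - 1) div 2}\<close> contains
  exactly one leader, and has six elements.\<close>
definition leaders :: "nat set" where "leaders = {a. 1 \<le> a \<and> a \<le> q * r \<and> \<not> q dvd a}"

lemma less_n_if_le_half_q_square: "m \<le> q * r + r \<Longrightarrow> m < n"
  using n_expand q_eq by (simp add: algebra_simps)

lemma leaders_sum_lt:
  assumes "a \<in> leaders" "b \<in> leaders"
  shows "a + b * q < n"
proof -
  have "a \<le> q * r" "b * q \<le> q * q * r"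
    using assms mult_right_mono[of b "q * r" q] by (auto simp: leaders_def mult_ac)
  then show ?thesis
    using n_expand by linarith
qed

lemma leaders_int:
  assumes "a \<in> leaders" "b \<in> leaders"
  shows "1 \<le> int a" "\<not> int q dvd int a" "0 \<le> int a * int q"
    and "int a + int b * int q < int n" "int a + int b < int n" "int a * int q < int n"
proof -
  show "1 \<le> int a" "\<not> int q dvd int a" "0 \<le> int a * int q"
    using assms(1) by (auto simp: leaders_def)
  have "a + b * q < n" "b + a * q < n" "1 \<le> b" "b \<le> b * q"
    using leaders_sum_lt[OF assms] leaders_sum_lt[OF assms(2,1)] assms(2) q_ge_3
    by (auto simp: leaders_def)
  then have "a + b * q < n" "a + b < n" "a * q < n"
    by linarith+
  then show "int a + int b * int q < int n" "int a + int b < int n" "int a * int q < int n"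
    by (simp_all only: of_nat_add[symmetric] of_nat_mult[symmetric] of_nat_less_iff)
qed

text \<open>Using \<open>q^3 \<equiv> -1 (mod n)\<close>, each case reaches a multiple of \<open>n\<close> of absolute value below \<open>n\<close>.\<close>
lemma leaders_dvd_diff:
  assumes "a \<in> leaders" "b \<in> leaders" "u < 3" and dvd: "int n dvd int a * int q ^ u - int b"
  shows "u = 0 \<and> a = b"
proof -
  note A = leaders_int[OF assms(1,2)] and B = leaders_int[OF assms(2,1)]
  from \<open>u < 3\<close> consider "u = 0" | "u = 1" | "u = 2"
    by linarith
  then show ?thesis
  proof cases
    case 1
    have "\<bar>int a - int b\<bar> < int n"
      unfolding abs_less_iff using A B by (intro conjI) linarith+
    with dvd 1 have "int a - int b = 0"
      by (intro int_dvd_abs_less_imp_eq_0[of "int n"]) auto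
    with 1 show ?thesis
      by simp
  next
    case 2
    have "\<bar>int a * int q - int b\<bar> < int n"
      unfolding abs_less_iff using A B by (intro conjI) linarith+
    with dvd 2 have "int a * int q - int b = 0"
      by (intro int_dvd_abs_less_imp_eq_0[of "int n"]) auto
    with B(2) show ?thesis
      by (metis dvd_triv_right eq_iff_diff_eq_0)
  next
    case 3
    have "int a + int b * int q = int a * (int q ^ 3 + 1) - int q * (int a * int q ^ 2 - int b)"
      by (simp add: algebra_simps power2_eq_square power3_eq_cube)
    moreover have "int n dvd int a * (int q ^ 3 + 1) - int q * (int a * int q ^ 2 - int b)"
      by (rule dvd_diff[OF dvd_mult[OF n_dvd_q_cube_plus_1] dvd_mult[OF dvd[unfolded 3]]])
    ultimately have "int n dvd int a + int b * int q"
      by simp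
    moreover have "\<bar>int a + int b * int q\<bar> < int n"
      unfolding abs_less_iff using A B by (intro conjI) linarith+
    ultimately have "int a + int b * int q = 0"
      by (rule int_dvd_abs_less_imp_eq_0)
    with A B show ?thesis
      by linarith
  qed
qed

lemma leaders_not_dvd_sum:
  assumes "a \<in> leaders" "b \<in> leaders" "u < 3" and dvd: "int n dvd int a * int q ^ u + int b"
  shows False
proof -
  note A = leaders_int[OF assms(1,2)] and B = leaders_int[OF assms(2,1)]
  from \<open>u < 3\<close> consider "u = 0" | "u = 1" | "u = 2"
    by linarith
  then show ?thesis
  proof cases
    case 1
    have "\<bar>int a + int b\<bar> < int n"
      unfolding abs_less_iff using A B by (intro conjI) linarith+
    with dvd 1 have "int a + int b = 0"
      by (intro int_dvd_abs_less_imp_eq_0[of "int n"]) auto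
    with A B show ?thesis
      by simp
  next
    case 2
    have "\<bar>int a * int q + int b\<bar> < int n"
      unfolding abs_less_iff using A B by (intro conjI) linarith+
    with dvd 2 have "int a * int q + int b = 0"
      by (intro int_dvd_abs_less_imp_eq_0[of "int n"]) auto
    with A B show ?thesis
      by linarith
  next
    case 3
    have "int a - int b * int q = int a * (int q ^ 3 + 1) - int q * (int a * int q ^ 2 + int b)"
      by (simp add: algebra_simps power2_eq_square power3_eq_cube)
    moreover have "int n dvd int a * (int q ^ 3 + 1) - int q * (int a * int q ^ 2 + int b)"
      by (rule dvd_diff[OF dvd_mult[OF n_dvd_q_cube_plus_1] dvd_mult[OF dvd[unfolded 3]]])
    ultimately have "int n dvd int a - int b * int q"
      by simp
    moreover have "\<bar>int a - int b * int q\<bar> < int n"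
      unfolding abs_less_iff using A B by (intro conjI) linarith+
    ultimately have "int a - int b * int q = 0"
      by (rule int_dvd_abs_less_imp_eq_0)
    with A(2) show ?thesis
      by (metis dvd_triv_right eq_iff_diff_eq_0)
  qed
qed

lemma leaders_cong_shift:
  assumes "a \<in> leaders" "b \<in> leaders" "s < 6" "[a * q ^ s = b] (mod n)"
  shows "s = 0 \<and> a = b"
proof -
  have "[int (a * q ^ s) = int b] (mod int n)"
    using assms(4) by (simp only: cong_int_iff)
  then have dvd: "int n dvd int a * int q ^ s - int b"
    by (simp add: cong_iff_dvd_diff)
  show ?thesis
  proof (cases "s < 3")
    case False
    then have eq: "int a * int q ^ (s - 3) + int b
        = int a * int q ^ (s - 3) * (int q ^ 3 + 1) - (int a * int q ^ s - int b)"
      by (simp add: algebra_simps flip: power_add)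
    have "int n dvd int a * int q ^ (s - 3) * (int q ^ 3 + 1) - (int a * int q ^ s - int b)"
      by (rule dvd_diff[OF dvd_mult[OF n_dvd_q_cube_plus_1] dvd])
    then have "int n dvd int a * int q ^ (s - 3) + int b"
      by (simp only: eq)
    with assms(1-3) have False
      by (intro leaders_not_dvd_sum[of a b "s - 3"]) auto
    then show ?thesis ..
  qed (use assms(1,2) dvd leaders_dvd_diff in blast)
qed

lemma leaders_cong_eq:
  assumes "a \<in> leaders" "b \<in> leaders" "t < 6" "t' < 6" "[a * q ^ t = b * q ^ t'] (mod n)"
  shows "a = b \<and> t = t'"
proof -
  have *: "a = b \<and> t = t'"
    if "a \<in> leaders" "b \<in> leaders" "t < 6" "t' \<le> t" "[a * q ^ t = b * q ^ t'] (mod n)" for a b t t'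
  proof -
    have "[q ^ t' * (a * q ^ (t - t')) = q ^ t' * b] (mod n)"
      using that(4,5) by (simp add: mult_ac flip: power_add)
    then have "[a * q ^ (t - t') = b] (mod n)"
      using coprime_q_n by (subst (asm) cong_mult_lcancel_nat) (simp_all add: coprime_power_left_iff)
    with that show ?thesis
      using leaders_cong_shift[of a b "t - t'"] by simp
  qed
  show ?thesis
    using *[of a b t t'] *[of b a t' t] assms by (cases "t' \<le> t") (auto simp: cong_sym_eq)
qed

text \<open>Multiples of \<open>q\<close> reduce to \<open>i / q\<close>; an \<open>i = q r + s\<close> above the leaders reduces to
  \<open>n - i q < i\<close>, because \<open>(n - i q) q^2 \<equiv> -i q^3 \<equiv> i\<close>.\<close>
lemma exists_leader:
  assumes "1 \<le> i" "i \<le> q * r + r"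
  shows "\<exists>a\<in>leaders. \<exists>t. a \<le> i \<and> [i = a * q ^ t] (mod n)"
  using assms
proof (induction i rule: less_induct)
  case (less i)
  show ?case
  proof (cases "q dvd i")
    case True
    then obtain j where j: "i = q * j"
      by (auto elim!: dvdE)
    with less.prems q_ge_3 have "1 \<le> j" "j < i"
      by (auto simp: Suc_le_eq)
    with less.IH[of j] less.prems obtain a t where "a \<in> leaders" "a \<le> j" "[j = a * q ^ t] (mod n)"
      by auto
    moreover from cong_scalar_left[OF this(3), of q] have "[i = a * q ^ Suc t] (mod n)"
      unfolding j by (simp add: mult_ac)
    ultimately show ?thesis
      using \<open>j < i\<close> by (intro bexI[of _ a] exI[of _ "Suc t"]) auto
  next
    case False
    show ?thesis
    proof (cases "i \<le> q * r")
      case True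
      with False less.prems show ?thesis
        by (intro bexI[of _ i] exI[of _ 0]) (auto simp: leaders_def)
    next
      case above: False
      define j where "j = n - i * q"
      define s where "s = i - q * r"
      have "1 \<le> s" "s \<le> r" "i = q * r + s"
        using above less.prems by (auto simp: s_def)
      then have "i * q = q * q * r + q * s" "q \<le> q * s" "q * s \<le> q * r"
        by (simp_all add: algebra_simps)
      then have "i * q + j = n" "1 \<le> j" "j < i"
        using n_expand q_eq \<open>1 \<le> s\<close> \<open>i = q * r + s\<close> unfolding j_def by linarith+
      with less.IH[of j] less.prems obtain a t where "a \<in> leaders" "a \<le> j" "[j = a * q ^ t] (mod n)"
        by auto
      have "[i = i + n * q ^ 2] (mod n)"
        by (simp add: cong_def)
      also have "i + n * q ^ 2 = j * q ^ 2 + (i * q ^ 3 + i)"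
        unfolding \<open>i * q + j = n\<close>[symmetric]
        by (simp add: algebra_simps power2_eq_square power3_eq_cube)
      also have "[\<dots> = j * q ^ 2 + 0] (mod n)"
        by (intro cong_add cong_refl q_cube_cong_minus)
      also have "[j * q ^ 2 + 0 = a * q ^ (t + 2)] (mod n)"
        using cong_scalar_right[OF \<open>[j = a * q ^ t] (mod n)\<close>, of "q ^ 2"]
        by (simp add: power_add power2_eq_square mult_ac)
      finally show ?thesis
        using \<open>a \<in> leaders\<close> \<open>a \<le> j\<close> \<open>j < i\<close>
        by (intro bexI[of _ a] exI[of _ "t + 2"]) auto
    qed
  qed
qed

lemma defining_set_eq_leaders:
  assumes "m \<le> q * r + r"
  shows "defining_set q n {1..m} = (\<lambda>(a, t). a * q ^ t mod n) ` ((leaders \<inter> {..m}) \<times> {..<6})"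
proof (intro Set.set_eqI iffI)
  fix z
  assume "z \<in> defining_set q n {1..m}"
  then obtain i t where "z < n" "i \<in> {1..m}" "[z = i * q ^ t] (mod n)"
    by (auto simp: defining_set_def)
  moreover obtain a t' where "a \<in> leaders" "a \<le> i" "[i = a * q ^ t'] (mod n)"
    using exists_leader[of i] \<open>i \<in> {1..m}\<close> assms by auto
  ultimately have "[z = a * q ^ (t' + t)] (mod n)"
    by (metis (no_types, lifting) cong_scalar_right cong_trans mult.assoc power_add)
  then have "z = a * q ^ ((t' + t) mod 6) mod n"
    using q_power_mod_6 \<open>z < n\<close> by (metis cong_def cong_trans mod_less)
  with \<open>a \<in> leaders\<close> \<open>a \<le> i\<close> \<open>i \<in> {1..m}\<close>
  show "z \<in> (\<lambda>(a, t). a * q ^ t mod n) ` ((leaders \<inter> {..m}) \<times> {..<6})"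
    by (intro image_eqI[of _ _ "(a, (t' + t) mod 6)"]) auto
next
  fix z
  assume "z \<in> (\<lambda>(a, t). a * q ^ t mod n) ` ((leaders \<inter> {..m}) \<times> {..<6})"
  then obtain a t where "a \<in> leaders" "a \<le> m" "z = a * q ^ t mod n"
    by auto
  moreover have "0 < n"
    using n_expand by simp
  ultimately show "z \<in> defining_set q n {1..m}"
    unfolding defining_set_def by (auto simp: leaders_def cong_def)
qed

lemma card_defining_set_1:
  assumes "m \<le> q * r + r"
  shows "card (defining_set q n {1..m}) = 6 * card (leaders \<inter> {..m})"
proof -
  have "inj_on (\<lambda>(a, t). a * q ^ t mod n) ((leaders \<inter> {..m}) \<times> {..<6})"
    by (auto simp: inj_on_def cong_def dest: leaders_cong_eq)
  then show ?thesis
    unfolding defining_set_eq_leaders[OF assms] by (simp add: card_image card_cartesian_product)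
qed

lemma card_defining_set_0:
  assumes "m \<le> q * r + r"
  shows "card (defining_set q n {0..m}) = 6 * card (leaders \<inter> {..m}) + 1"
proof -
  have "0 < n"
    using n_expand by simp
  have "0 \<notin> defining_set q n {1..m}"
  proof
    assume "0 \<in> defining_set q n {1..m}"
    then obtain a t where "a \<in> leaders" "a * q ^ t mod n = 0"
      unfolding defining_set_eq_leaders[OF assms] by auto
    then have "n dvd a"
      using coprime_q_n by (simp add: coprime_commute coprime_dvd_mult_left_iff mod_eq_0_iff_dvd)
    moreover have "0 < a" "a < n"
      using \<open>a \<in> leaders\<close> leaders_sum_lt[of a a] by (auto simp: leaders_def)
    ultimately show False
      using dvd_imp_le by fastforce
  qed
  moreover have "{0..m} = insert 0 {1..m}"
    by auto
  ultimately show ?thesis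
    using \<open>0 < n\<close> card_defining_set_1[OF assms]
    by (simp add: defining_set_insert_0 finite_defining_set)
qed

lemma card_leaders_upto: "card (leaders \<inter> {..m}) = min m (q * r) - min m (q * r) div q"
proof -
  define M where "M = min m (q * r)"
  have "leaders \<inter> {..m} = {1..M} - {a. q dvd a}"
    by (auto simp: leaders_def M_def)
  moreover have "{1..M} \<inter> {a. q dvd a} = (\<lambda>j. q * j) ` {1..M div q}"
  proof (intro Set.set_eqI iffI)
    fix a
    assume "a \<in> {1..M} \<inter> {a. q dvd a}"
    then obtain j where "a = q * j" "1 \<le> a" "a \<le> M"
      by (auto elim!: dvdE)
    with q_ge_3 show "a \<in> (\<lambda>j. q * j) ` {1..M div q}"
      by (auto simp: less_eq_div_iff_mult_less_eq mult.commute)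
  qed (use q_ge_3 in \<open>auto simp: less_eq_div_iff_mult_less_eq mult.commute\<close>)
  moreover have "card ((\<lambda>j. q * j) ` {1..M div q}) = M div q"
    using q_ge_3 by (simp add: card_image inj_on_def)
  ultimately show ?thesis
    by (simp add: card_Diff_subset_Int M_def)
qed

lemma six_card_leaders_less: "6 * card (leaders \<inter> {..m}) < n"
proof -
  have "card (leaders \<inter> {..m}) \<le> card (leaders \<inter> {..q * r})"
    by (intro card_mono) (auto simp: leaders_def)
  also have "\<dots> = q * r - r"
    using card_leaders_upto[of "q * r"] q_ge_3 by simp
  finally have "6 * card (leaders \<inter> {..m}) \<le> 6 * (q * r - r)"
    by simp
  also have "\<dots> < n"
  proof (cases "r = 1")
    case False
    then have "5 * (q * r) \<le> q * (q * r)"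
      using q_eq r_ge_1 by (intro mult_right_mono) auto
    moreover have "6 * (q * r - r) \<le> 6 * (q * r)"
      by simp
    ultimately show ?thesis
      using n_expand by (simp only: mult.assoc)
  qed (use n_expand q_eq in simp)
  finally show ?thesis .
qed

text \<open>Since \<open>n - i \<equiv> i q^3 (mod n)\<close>, the defining set of \<open>{0..m}\<close> contains the \<open>2 m + 1\<close>
  consecutive residues \<open>n - m, \<dots>, n - 1, 0, \<dots>, m\<close>.\<close>
lemma run_in_defining_set_0:
  assumes "m \<le> q * r + r" "j \<le> 2 * m"
  shows "(n - m + j) mod n \<in> defining_set q n {0..m}"
proof -
  have "m < n"
    using less_n_if_le_half_q_square[OF assms(1)] .
  show ?thesis
  proof (cases "m \<le> j")
    case True
    then have "(n - m + j) mod n = j - m"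
      using assms(2) \<open>m < n\<close> by (simp add: mod_if)
    moreover have "j - m \<in> {0..m}"
      using assms(2) by auto
    moreover have "{0..m} \<subseteq> defining_set q n {0..m}"
      using \<open>m < n\<close> by (intro subset_defining_set) auto
    ultimately show ?thesis
      by auto
  next
    case False
    define i where "i = m - j"
    have "1 \<le> i" "i \<le> m" "n - m + j = n - i"
      using False \<open>m < n\<close> by (auto simp: i_def)
    have "[n - i + i = 0] (mod n)"
      using \<open>i \<le> m\<close> \<open>m < n\<close> by (simp add: cong_0_iff)
    also have "[0 = i * q ^ 3 + i] (mod n)"
      using q_cube_cong_minus by (rule cong_sym)
    finally have "[n - i + i = i * q ^ 3 + i] (mod n)" .
    then have "[n - i = i * q ^ 3] (mod n)"
      by (simp only: cong_add_rcancel_nat)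
    with \<open>1 \<le> i\<close> \<open>i \<le> m\<close> \<open>m < n\<close> \<open>n - m + j = n - i\<close> show ?thesis
      unfolding defining_set_def by auto
  qed
qed

lemma dimension_formula:
  fixes \<delta> :: nat and \<epsilon> :: int
  assumes "1 \<le> \<delta> - 1" "\<delta> - 1 \<le> (q^2 - 1) div 2"
    and "\<epsilon> = \<lceil>real (\<delta> - 1) * (1 - 1 / real q)\<rceil>"
  shows "(if 2 \<le> \<delta> \<and> \<delta> \<le> (q^2 - 1) div 2 - (q - 3) div 2 then int n - 6 * \<epsilon>
          else int n - 6 * \<epsilon> + 6 * (int \<delta> - int ((q^2 - 1) div 2) + \<lfloor>(real q - 2) / 2\<rfloor>))
       = int n - 6 * int (card (leaders \<inter> {..\<delta> - 1}))"
proof -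
  define m where "m = \<delta> - 1"
  have m: "1 \<le> m" "m \<le> q * r + r" "\<delta> = m + 1"
    using assms(1,2) half_q_square by (auto simp: m_def)
  have \<epsilon>: "\<epsilon> = int m - int (m div q)"
    using assms(3) q_ge_3 by (simp add: m_def ceiling_mult_one_minus_inverse)
  have "(q - 3) div 2 = r - 1"
    using q_eq by simp
  then have cond: "(2 \<le> \<delta> \<and> \<delta> \<le> (q^2 - 1) div 2 - (q - 3) div 2) \<longleftrightarrow> m \<le> q * r"
    unfolding half_q_square using m r_ge_1 by auto
  show ?thesis
  proof (cases "m \<le> q * r")
    case True
    then have "int (card (leaders \<inter> {..m})) = int m - int (m div q)"
      by (simp add: card_leaders_upto of_nat_diff)
    with True cond m(3) show ?thesis
      by (simp add: \<epsilon>)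
  next
    case False
    have "q * r \<le> m" "m < q * Suc r"
      using False m(2) q_eq by auto
    then have "m div q = r"
      by (rule div_nat_eqI)
    with False have "int (card (leaders \<inter> {..m})) = int (q * r) - int r"
      using q_ge_3 by (simp add: card_leaders_upto of_nat_diff)
    moreover have "\<lfloor>(real q - 2) / 2\<rfloor> = int r - 1"
      by (rule floor_unique) (simp_all add: q_eq)
    ultimately show ?thesis
      using False cond \<open>m div q = r\<close> m(3) unfolding half_q_square by (simp add: \<epsilon> algebra_simps)
  qed
qed

end

section \<open>BCH codes of length \<open>(q^3 + 1) / 2\<close>\<close>

locale bch_q_cube = bch_setting e \<alpha> n + q_cube_setting "CARD('a)" r n
  for e :: "'a::{field_gcd,finite} \<Rightarrow> 'b::{field,finite}" and \<alpha> n r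
begin

lemma code_params_bch_code_1:
  assumes "m \<le> CARD('a) * r + r"
  shows "code_params (bch_code e \<alpha> n (m + 1) 1) n (n - 6 * card (leaders \<inter> {..m})) (m + 1)"
proof -
  have "{1..m} \<subseteq> {..<n}"
    using less_n_if_le_half_q_square[OF assms] by auto
  moreover have "(1 + j) mod n \<in> defining_set CARD('a) n {1..m}" if "j < m + 1 - 1" for j
  proof -
    have "(1 + j) mod n = 1 + j" "1 + j \<in> {1..m}"
      using that less_n_if_le_half_q_square[OF assms] by auto
    then show ?thesis
      using subset_defining_set[OF \<open>{1..m} \<subseteq> {..<n}\<close>] by (metis subsetD)
  qed
  ultimately show ?thesis
    using code_params_Lcm_mpoly[of "{1..m}" "m + 1" 1] card_defining_set_1[OF assms]
    by (simp add: bch_code_eq)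
qed

lemma code_params_bch_code_0:
  assumes "m \<le> CARD('a) * r + r"
  shows "code_params (bch_code e \<alpha> n (m + 2) 0) n (n - 6 * card (leaders \<inter> {..m}) - 1) (2 * m + 2)"
proof -
  have "{0..m} \<subseteq> {..<n}"
    using less_n_if_le_half_q_square[OF assms] by auto
  moreover have "(n - m + j) mod n \<in> defining_set CARD('a) n {0..m}" if "j < 2 * m + 2 - 1" for j
    using that run_in_defining_set_0[OF assms] by simp
  ultimately show ?thesis
    using code_params_Lcm_mpoly[of "{0..m}" "2 * m + 2" "n - m"] card_defining_set_0[OF assms]
    by (simp add: bch_code_eq)
qed

end

theorem theorem5:
  fixes e :: "'a::{field_gcd,finite} \<Rightarrow> 'b::{field,finite}"
    and \<alpha> :: 'b and q n \<delta> :: nat and \<epsilon> k :: int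
  assumes "card (UNIV :: 'a set) = q" and "odd q"
    and "n = (q ^ 3 + 1) div 2"
    and "card (UNIV :: 'b set) = q ^ ord n q"
    and "field_emb e"
    and "\<forall>y::'b. y \<noteq> 0 \<longrightarrow> (\<exists>j::nat. y = \<alpha> ^ j)"
    and "1 \<le> \<delta> - 1" and "\<delta> - 1 \<le> (q^2 - 1) div 2"
    and "\<epsilon> = \<lceil>real (\<delta> - 1) * (1 - 1 / real q)\<rceil>"
    and "k = (if 2 \<le> \<delta> \<and> \<delta> \<le> (q^2 - 1) div 2 - (q - 3) div 2 then int n - 6 * \<epsilon>
              else int n - 6 * \<epsilon> + 6 * (int \<delta> - int ((q^2 - 1) div 2) + \<lfloor>(real q - 2) / 2\<rfloor>))"
  shows "code_params (bch_code e \<alpha> n \<delta> 1) n (nat k) \<delta>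
       \<and> code_params (bch_code e \<alpha> n (\<delta> + 1) 0) n (nat (k - 1)) (2 * \<delta>)"
proof -
  define r where "r = (q - 1) div 2"
  have "2 \<le> q"
    using card_finite_field_ge_2[where 'a = 'a] assms(1) by simp
  with assms(2) have "q = 2 * r + 1" "1 \<le> r"
    by (auto simp: r_def elim!: oddE)
  moreover have "2 * n = q ^ 3 + 1"
    using assms(2,3) by simp
  ultimately interpret q_cube_setting "CARD('a)" r n
    using assms(1) by unfold_locales simp_all
  have "[q ^ ord n q = 1] (mod n)"
    using ord_works[of q n] by blast
  then have "n dvd CARD('b) - 1"
    unfolding assms(4) by (rule cong_to_1_nat)
  then interpret bch_q_cube e \<alpha> n r
    using assms(5,6) \<open>2 * n = q ^ 3 + 1\<close> \<open>1 \<le> r\<close> \<open>q = 2 * r + 1\<close>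
    by unfold_locales (simp_all add: power3_eq_cube)
  define m where "m = \<delta> - 1"
  have "m \<le> CARD('a) * r + r" "\<delta> = m + 1"
    using assms(1,7,8) half_q_square by (auto simp: m_def)
  have "k = int n - 6 * int (card (leaders \<inter> {..m}))"
    unfolding assms(10) m_def assms(1) by (rule dimension_formula[unfolded assms(1), OF assms(7,8,9)])
  with six_card_leaders_less[of m] have "nat k = n - 6 * card (leaders \<inter> {..m})"
    "nat (k - 1) = n - 6 * card (leaders \<inter> {..m}) - 1"
    by simp_all
  with \<open>\<delta> = m + 1\<close> show ?thesis
    using code_params_bch_code_1 code_params_bch_code_0 \<open>m \<le> CARD('a) * r + r\<close> by simp
qed

end
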